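(* Let $\Xi,\Gamma,\Upsilon,\delta_s>0$, $L\ge1$, $\beta>1$, and $c_1,c_2>0$. Suppose $\delta_s\le2\Gamma\Xi^2$, set $\delta_h=c_1\delta_s$ and $\Delta_h=c_2\delta_s$, and define $$\lambda_W(\xi_s)=e^{\delta_s}\Upsilon L\Xi^3,\quad \lambda_X(\xi_s)=e^{\delta_s}\Upsilon(2\Gamma\Xi^2+1),$$ $$\lambda_W(\xi_h)=2e^{\delta_h}\Upsilon L\Xi^3\big(1+\tfrac1{\Delta_h}\big),\quad \lambda_X(\xi_h)=e^{\delta_h}\Upsilon\big(\beta+2\Gamma\Xi^2(\beta+1)(1+\tfrac1{\Delta_h})\big).$$ Then $\lambda_W(\xi_h)<\lambda_W(\xi_s)$ when $$c_1+\frac1{\delta_s}\log\Big(2\Big(1+\frac1{c_2\delta_s}\Big)\Big)<1,$$ and $\lambda_X(\xi_h)<\lambda_X(\xi_s)$ when $$c_1+\frac1{\delta_s}\log\Big(2\Gamma\Xi^2(1+\beta)\Big(1+\frac1{c_2\delta_s}\Big)+\beta\Big)-\frac1{\delta_s}\log(2\Gamma\Xi^2+1)<1.$$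
   Context: These quantities are the attention stability constants for full softmax attention (semantic dispersion $\delta_s$, i.e. the largest gap between query–key dot products of any query, token norms $\le\Xi$, $\|{\mathbf W}\|\le\Gamma$, $\|{\mathbf V}\|\le\Upsilon$, sequence length $L$) and for $k$-heavy-hitter sparse attention (semantic dispersion $\delta_h$ among unmasked keys, minimum gap $\Delta_h$ between unmasked and masked dot products, at most $\beta k$ queries per key). *)

theory Defs
  imports Complex_Main
begin

text \<open>Stability constants for full softmax attention (xi_s) and heavy-hitter
sparse attention (xi_h). Parameters: Xi (token norm bound), Gamma (bound on W),
Upsilon (bound on V), L (sequence length), delta (dispersion), Delta (gap), beta.\<close>

definition lambdaW_s :: "real \<Rightarrow> real \<Rightarrow> real \<Rightarrow> real \<Rightarrow> real" where
  "lambdaW_s \<delta>s \<Upsilon> L \<Xi> = exp \<delta>s * \<Upsilon> * L * \<Xi>^3"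

definition lambdaX_s :: "real \<Rightarrow> real \<Rightarrow> real \<Rightarrow> real \<Rightarrow> real" where
  "lambdaX_s \<delta>s \<Upsilon> \<Gamma> \<Xi> = exp \<delta>s * \<Upsilon> * (2 * \<Gamma> * \<Xi>^2 + 1)"

definition lambdaW_h :: "real \<Rightarrow> real \<Rightarrow> real \<Rightarrow> real \<Rightarrow> real \<Rightarrow> real" where
  "lambdaW_h \<delta>h \<Delta>h \<Upsilon> L \<Xi> = 2 * exp \<delta>h * \<Upsilon> * L * \<Xi>^3 * (1 + 1 / \<Delta>h)"

definition lambdaX_h :: "real \<Rightarrow> real \<Rightarrow> real \<Rightarrow> real \<Rightarrow> real \<Rightarrow> real \<Rightarrow> real" where
  "lambdaX_h \<delta>h \<Delta>h \<Upsilon> \<beta> \<Gamma> \<Xi> =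
     exp \<delta>h * \<Upsilon> * (\<beta> + 2 * \<Gamma> * \<Xi>^2 * (\<beta> + 1) * (1 + 1 / \<Delta>h))"

end

theory Submission
  imports Defs
begin

text \<open>Each stability constant is an exponential factor times an algebraic one, and the
sparse and full constants share the remaining factors. Taking logarithms,
\<open>exp (c\<^sub>1 \<delta>\<^sub>s) A < exp \<delta>\<^sub>s B\<close> is equivalent to
\<open>c\<^sub>1 + (ln A - ln B) / \<delta>\<^sub>s < 1\<close>, which is exactly the form of both hypotheses
(with \<open>B = 1\<close> for \<open>\<lambda>\<^sub>W\<close>).\<close>

lemma exp_mult_less_exp_mult_if_log_bound:
  fixes A B c \<delta> :: real
  assumes "A > 0" and "B > 0" and "\<delta> > 0"
    and "c + (1 / \<delta>) * ln A - (1 / \<delta>) * ln B < 1"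
  shows "exp (c * \<delta>) * A < exp \<delta> * B"
proof -
  have "\<delta> * (c + (1 / \<delta>) * ln A - (1 / \<delta>) * ln B) < \<delta> * 1"
    using assms(4,3) by (rule mult_strict_left_mono)
  then have "c * \<delta> + ln A < \<delta> + ln B"
    using \<open>\<delta> > 0\<close> by (simp add: algebra_simps)
  then have "exp (c * \<delta> + ln A) < exp (\<delta> + ln B)"
    by simp
  then show ?thesis
    using \<open>A > 0\<close> \<open>B > 0\<close> by (simp add: exp_add)
qed

lemma lambdaW_h_less_lambdaW_s:
  fixes \<Xi> \<Upsilon> L \<delta>s c1 c2 :: real
  assumes "\<Xi> > 0" and "\<Upsilon> > 0" and "L > 0" and "\<delta>s > 0" and "c2 > 0"
    and "c1 + (1 / \<delta>s) * ln (2 * (1 + 1 / (c2 * \<delta>s))) < 1"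
  shows "lambdaW_h (c1 * \<delta>s) (c2 * \<delta>s) \<Upsilon> L \<Xi> < lambdaW_s \<delta>s \<Upsilon> L \<Xi>"
proof -
  define A where "A = 2 * (1 + 1 / (c2 * \<delta>s))"
  have "A > 0"
    using assms by (simp add: A_def add_pos_pos)
  then have "exp (c1 * \<delta>s) * A < exp \<delta>s * 1"
    using assms(4,6) by (intro exp_mult_less_exp_mult_if_log_bound) (simp_all add: A_def)
  then have "(exp (c1 * \<delta>s) * A) * (\<Upsilon> * L * \<Xi>^3) < exp \<delta>s * (\<Upsilon> * L * \<Xi>^3)"
    using assms by (intro mult_strict_right_mono) simp_all
  then show ?thesis
    by (simp add: lambdaW_h_def lambdaW_s_def A_def algebra_simps)
qed

lemma lambdaX_h_less_lambdaX_s: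
  fixes \<Xi> \<Gamma> \<Upsilon> \<beta> \<delta>s c1 c2 :: real
  assumes "\<Gamma> \<ge> 0" and "\<Upsilon> > 0" and "\<beta> > 0" and "\<delta>s > 0" and "c2 > 0"
    and "c1 + (1 / \<delta>s) * ln (2 * \<Gamma> * \<Xi>^2 * (1 + \<beta>) * (1 + 1 / (c2 * \<delta>s)) + \<beta>)
           - (1 / \<delta>s) * ln (2 * \<Gamma> * \<Xi>^2 + 1) < 1"
  shows "lambdaX_h (c1 * \<delta>s) (c2 * \<delta>s) \<Upsilon> \<beta> \<Gamma> \<Xi> < lambdaX_s \<delta>s \<Upsilon> \<Gamma> \<Xi>"
proof -
  define A where "A = 2 * \<Gamma> * \<Xi>^2 * (1 + \<beta>) * (1 + 1 / (c2 * \<delta>s)) + \<beta>"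
  define B where "B = 2 * \<Gamma> * \<Xi>^2 + 1"
  have "A > 0"
    using assms by (simp add: A_def add_nonneg_pos)
  moreover have "B > 0"
    using assms by (simp add: B_def add_nonneg_pos)
  ultimately have "exp (c1 * \<delta>s) * A < exp \<delta>s * B"
    using assms(4,6) by (intro exp_mult_less_exp_mult_if_log_bound) (simp_all add: A_def B_def)
  then have "(exp (c1 * \<delta>s) * A) * \<Upsilon> < (exp \<delta>s * B) * \<Upsilon>"
    using assms(2) by (rule mult_strict_right_mono)
  then show ?thesis
    by (simp add: lambdaX_h_def lambdaX_s_def A_def B_def algebra_simps)
qed

theorem corollary1:
  fixes \<Xi> \<Gamma> \<Upsilon> \<delta>s L \<beta> c1 c2 \<delta>h \<Delta>h :: real
  assumes "\<Xi> > 0" and "\<Gamma> > 0" and "\<Upsilon> > 0" and "\<delta>s > 0"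
    and "L \<ge> 1" and "\<beta> > 1" and "c1 > 0" and "c2 > 0"
    and "\<delta>s \<le> 2 * \<Gamma> * \<Xi>^2"
    and "\<delta>h = c1 * \<delta>s" and "\<Delta>h = c2 * \<delta>s"
  shows "(c1 + (1 / \<delta>s) * ln (2 * (1 + 1 / (c2 * \<delta>s))) < 1 \<longrightarrow>
            lambdaW_h \<delta>h \<Delta>h \<Upsilon> L \<Xi> < lambdaW_s \<delta>s \<Upsilon> L \<Xi>)
       \<and> (c1 + (1 / \<delta>s) * ln (2 * \<Gamma> * \<Xi>^2 * (1 + \<beta>) * (1 + 1 / (c2 * \<delta>s)) + \<beta>)
              - (1 / \<delta>s) * ln (2 * \<Gamma> * \<Xi>^2 + 1) < 1 \<longrightarrow>
            lambdaX_h \<delta>h \<Delta>h \<Upsilon> \<beta> \<Gamma> \<Xi> < lambdaX_s \<delta>s \<Upsilon> \<Gamma> \<Xi>)"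
  using assms lambdaW_h_less_lambdaW_s[of \<Xi> \<Upsilon> L \<delta>s c2 c1]
    lambdaX_h_less_lambdaX_s[of \<Gamma> \<Upsilon> \<beta> \<delta>s c2 c1 \<Xi>]
  by simp

end
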